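(* Let $M$ be a hyperk\"ahler manifold with $b_2(M)\ge 6$, let $\Lambda=H^2(M,\mathbb{Z})$ with its BBF form $q$, let $h\in\Lambda$ be primitive with $q(h)>0$ and $\Lambda_h=h^\perp\subset\Lambda$, and let $\mathrm{MBM}\subset\Lambda$ be the set of MBM classes. There exists an infinite sequence of primitive rank-two anisotropic sublattices $\mathbb{M}_j\subset\Lambda$, $j\in\mathbb{N}$, such that $h\in\mathbb{M}_j$, $\mathbb{M}_j\cap\Lambda_h=\mathbb{Z}v_j$ with $v_j$ primitive and $q(v_j)\to-\infty$ as $j\to+\infty$, and $\mathbb{M}_j\cap\mathrm{MBM}=\emptyset$ for all $j$.
   Context: A hyperk\"ahler manifold is a compact simply connected complex manifold admitting a Riemannian metric with holonomy $\mathrm{Sp}(n)$. The BBF form $q$ on $\Lambda=H^2(M,\mathbb{Z})$ is rescaled to be integral and primitive; it has signature $(3,b_2(M)-3)$. MBM classes (in the sense of Amerik--Verbitsky) form a monodromy-invariant subset $\mathrm{MBM}\subset\Lambda$ of classes with negative square (they are the classes whose orthogonal hyperplanes give walls of K\"ahler cones on deformations of $M$); there is $N>0$ with $-N\le q(v)<0$ for all $v\in\mathrm{MBM}$. A lattice is anisotropic if it has no nonzero vector $x$ with $q(x)=0$. *)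

theory Defs
  imports "HOL-Analysis.Analysis"
begin

text \<open>The lattice Lambda = H^2(M,Z) is modelled as Z^n (type int^'n, n = b_2(M)),
  the BBF form by its integral symmetric Gram matrix B.\<close>

definition bil :: "('n::finite \<Rightarrow> 'n \<Rightarrow> int) \<Rightarrow> int^'n \<Rightarrow> int^'n \<Rightarrow> int" where
  "bil B x y = (\<Sum>i\<in>UNIV. \<Sum>j\<in>UNIV. x$i * B i j * y$j)"

definition qf :: "('n::finite \<Rightarrow> 'n \<Rightarrow> int) \<Rightarrow> int^'n \<Rightarrow> int" where
  "qf B x = bil B x x"

definition qfR :: "('n::finite \<Rightarrow> 'n \<Rightarrow> int) \<Rightarrow> real^'n \<Rightarrow> real" where
  "qfR B x = (\<Sum>i\<in>UNIV. \<Sum>j\<in>UNIV. x$i * real_of_int (B i j) * x$j)"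

definition symmetric_form :: "('n::finite \<Rightarrow> 'n \<Rightarrow> int) \<Rightarrow> bool" where
  "symmetric_form B \<longleftrightarrow> (\<forall>i j. B i j = B j i)"

definition primitive_form :: "('n::finite \<Rightarrow> 'n \<Rightarrow> int) \<Rightarrow> bool" where
  "primitive_form B \<longleftrightarrow> (\<forall>d::int. (\<forall>i j. d dvd B i j) \<longrightarrow> \<bar>d\<bar> = 1)"

text \<open>Signature (p,m) over the reals (with p + m = n this means nondegenerate).\<close>
definition has_signature :: "('n::finite \<Rightarrow> 'n \<Rightarrow> int) \<Rightarrow> nat \<Rightarrow> nat \<Rightarrow> bool" where
  "has_signature B p m \<longleftrightarrow> p + m = CARD('n) \<and>
     (\<exists>V W :: (real^'n) set. subspace V \<and> dim V = p \<and> (\<forall>x\<in>V. x \<noteq> 0 \<longrightarrow> qfR B x > 0) \<and>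
                             subspace W \<and> dim W = m \<and> (\<forall>x\<in>W. x \<noteq> 0 \<longrightarrow> qfR B x < 0))"

definition to_real :: "int^'n \<Rightarrow> real^'n" where
  "to_real x = (\<chi> i. real_of_int (x$i))"

definition primitive_vec :: "int^'n \<Rightarrow> bool" where
  "primitive_vec v \<longleftrightarrow> (\<forall>(k::int) x. v = k *s x \<longrightarrow> \<bar>k\<bar> = 1)"

definition sublattice :: "(int^'n) set \<Rightarrow> bool" where
  "sublattice L \<longleftrightarrow> 0 \<in> L \<and> (\<forall>x\<in>L. \<forall>y\<in>L. x + y \<in> L \<and> x - y \<in> L)"

definition lattice_rank :: "(int^'n::finite) set \<Rightarrow> nat" where
  "lattice_rank L = dim (to_real ` L)"

definition primitive_sublattice :: "(int^'n) set \<Rightarrow> bool" where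
  "primitive_sublattice L \<longleftrightarrow> sublattice L \<and>
     (\<forall>(k::int) x. k \<noteq> 0 \<longrightarrow> k *s x \<in> L \<longrightarrow> x \<in> L)"

definition anisotropic :: "('n::finite \<Rightarrow> 'n \<Rightarrow> int) \<Rightarrow> (int^'n) set \<Rightarrow> bool" where
  "anisotropic B L \<longleftrightarrow> (\<forall>x\<in>L. qf B x = 0 \<longrightarrow> x = 0)"

definition orth_compl :: "('n::finite \<Rightarrow> 'n \<Rightarrow> int) \<Rightarrow> int^'n \<Rightarrow> (int^'n) set" where
  "orth_compl B h = {x. bil B h x = 0}"

end

theory Submission
  imports Defs "HOL-Number_Theory.Residues"
begin

(* Choose mutually orthogonal w1, w2, w3 in h^perp with q(w1) < 0 and q(w2), q(w3) nonzero;
   they exist because the form is nondegenerate and not positive semidefinite. For k = 1..N pick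
   arbitrarily large primes P_k = 3 (mod 4) modulo which k q(h) is a nonzero square. Solving the
   diagonal form q(x w1 + y w2 + z w3) modulo every P_k^2 (pigeonhole, then the Chinese remainder
   theorem) yields a primitive v in h^perp with q(v) < 0 exactly divisible by every P_k, so
   q(v) <= -P_1.

   Let M be the saturation of Zh + Zv. Each x in M satisfies f^2 q(x) = a^2 q(h) + b^2 q(v) with
   f <> 0. If q(x) = -k with 1 <= k <= N, then q(h) a^2 + q(v) b^2 + k f^2 = 0. As -1 is not a
   square modulo P_k, the form q(h) a^2 + k f^2 is anisotropic modulo P_k, while P_k exactly divides
   q(v); infinite descent forces a = b = f = 0, a contradiction. The same descent with f = 0 shows
   that M is anisotropic. *)

section \<open>Diagonal quadratic forms over the integers\<close>

lemma fermat_theorem_int: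
  fixes p :: nat and a :: int
  assumes "prime p" and "\<not> int p dvd a"
  shows "[a ^ (p - 1) = 1] (mod int p)"
proof -
  define r where "r = nat (a mod int p)"
  have p0: "int p > 0" using assms(1) prime_gt_0_nat by auto
  have r: "int r = a mod int p" using p0 unfolding r_def by simp
  have "\<not> p dvd r"
  proof
    assume "p dvd r"
    then have "int p dvd a mod int p" unfolding r[symmetric] by simp
    then show False using assms(2) by (simp add: dvd_mod_iff)
  qed
  then have "[r ^ (p - 1) = 1] (mod p)" using fermat_theorem assms(1) by blast
  then have "[int r ^ (p - 1) = 1] (mod int p)" by (metis cong_int_iff of_nat_1 of_nat_power)
  moreover have "[a ^ (p - 1) = int r ^ (p - 1)] (mod int p)"
    using r by (intro cong_pow) (simp add: cong_def)
  ultimately show ?thesis using cong_trans by blast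
qed

lemma prime_3mod4_dvd_sum_squares:
  fixes p :: nat and u w :: int
  assumes p: "prime p" "p mod 4 = 3" and dvd: "int p dvd u\<^sup>2 + w\<^sup>2"
  shows "int p dvd w"
proof (rule ccontr)
  assume nw: "\<not> int p dvd w"
  have pp: "prime (int p)" using p by simp
  have nu: "\<not> int p dvd u"
  proof
    assume "int p dvd u"
    then have "int p dvd u\<^sup>2" by (simp add: power2_eq_square)
    then have "int p dvd w\<^sup>2" using dvd by (simp add: dvd_add_right_iff)
    then show False using nw pp prime_dvd_power by blast
  qed
  define e where "e = (p - 1) div 2"
  have pe: "p - 1 = 2 * e" and oe: "odd e" using p(2) unfolding e_def by presburger+
  have "[u ^ (p - 1) = (u\<^sup>2) ^ e] (mod int p)" using pe by (simp add: power_mult)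
  also have "[(u\<^sup>2) ^ e = (- (w\<^sup>2)) ^ e] (mod int p)"
    using dvd by (intro cong_pow) (simp add: cong_iff_dvd_diff)
  also have "(- (w\<^sup>2)) ^ e = - (w ^ (p - 1))" using oe pe by (simp add: power_mult)
  finally have "[u ^ (p - 1) = - (w ^ (p - 1))] (mod int p)" .
  moreover have "[u ^ (p - 1) = 1] (mod int p)" using fermat_theorem_int p(1) nu by blast
  moreover have "[- (w ^ (p - 1)) = - 1] (mod int p)"
    using fermat_theorem_int[OF p(1) nw] cong_minus_minus_iff by blast
  ultimately have "[1 = -1] (mod int p)" by (meson cong_sym cong_trans)
  then have "p dvd 2" by (simp add: cong_iff_dvd_diff) presburger
  then show False using p(2) dvd_imp_le[of p 2] by simp
qed

lemma prime_factor_3mod4: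
  fixes n :: nat
  shows "n mod 4 = 3 \<Longrightarrow> \<exists>p. prime p \<and> p dvd n \<and> p mod 4 = 3"
proof (induction n rule: less_induct)
  case (less n)
  have "n \<noteq> 1" using less.prems by auto
  then obtain q where q: "prime q" "q dvd n" using prime_factor_nat by blast
  show ?case
  proof (cases "q mod 4 = 3")
    case True
    then show ?thesis using q by blast
  next
    case False
    obtain n' where n': "n = q * n'" using q(2) by blast
    have "odd n" using less.prems by presburger
    then have "odd q" using n' by simp
    then have "q mod 4 = 1" using False by presburger
    moreover have "n mod 4 = ((q mod 4) * (n' mod 4)) mod 4" using n' by (simp add: mod_mult_eq)
    ultimately have n'3: "n' mod 4 = 3" using less.prems by simp
    have "n' > 0" using n'3 by (cases n') auto
    then have "1 * n' < q * n'" using prime_gt_1_nat[OF q(1)] by (intro mult_strict_right_mono) auto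
    then have "n' < n" using n' by simp
    then obtain p where "prime p" "p dvd n'" "p mod 4 = 3" using less.IH n'3 by blast
    then show ?thesis using n' by auto
  qed
qed

lemma large_prime_3mod4_dvd:
  fixes k :: int and b :: nat
  assumes k: "k > 0"
  shows "\<exists>p c. prime p \<and> b < p \<and> p mod 4 = 3 \<and> int p dvd k * c\<^sup>2 - 1"
proof -
  define L where "L = int (fact b)"
  define Z where "Z = k * (2 * L)\<^sup>2 - 1"
  have "L \<ge> 1" unfolding L_def by (simp add: fact_ge_1)
  then have "(2 * L)\<^sup>2 \<ge> 4" using mult_mono[of 2 "2 * L" 2 "2 * L"] by (simp add: power2_eq_square)
  then have "k * (2 * L)\<^sup>2 \<ge> 4" using mult_mono[of 1 k 4 "(2 * L)\<^sup>2"] k by simp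
  then have Zp: "Z > 0" unfolding Z_def by simp
  have "Z = 4 * (k * L\<^sup>2) - 1" unfolding Z_def by (simp add: power2_eq_square)
  then have "Z mod 4 = 3" by presburger
  then have "nat Z mod 4 = 3" using Zp nat_mod_distrib[of Z 4] by simp
  then obtain p where p: "prime p" "p dvd nat Z" "p mod 4 = 3" using prime_factor_3mod4 by blast
  have "int p dvd int (nat Z)" using p(2) by (simp only: of_nat_dvd_iff)
  then have pZ: "int p dvd Z" using Zp by simp
  have "b < p"
  proof (rule ccontr)
    assume "\<not> b < p"
    then have "p dvd fact b" using p(1) prime_ge_1_nat by (simp add: dvd_fact)
    then have "int p dvd L" unfolding L_def by (simp only: of_nat_dvd_iff)
    then have "int p dvd k * (2 * L)\<^sup>2" by (simp add: power2_eq_square)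
    then have "int p dvd k * (2 * L)\<^sup>2 - Z" using pZ by (rule dvd_diff)
    then have "int p dvd 1" unfolding Z_def by simp
    then show False using p(1) by simp
  qed
  then show ?thesis using p pZ unfolding Z_def by blast
qed

lemma prime_3mod4_binary_form_dvd:
  fixes p :: nat and A m c a f :: int
  assumes p: "prime p" "p mod 4 = 3" and square: "int p dvd m * A * c\<^sup>2 - 1"
    and dvd: "int p dvd A * a\<^sup>2 + m * f\<^sup>2"
  shows "int p dvd a \<and> int p dvd f"
proof
  \<comment> \<open>\<open>m A\<close> is a nonzero square mod \<open>p\<close>, so \<open>A c\<^sup>2\<close> turns the form into a sum of two squares.\<close>
  have "(A * a * c)\<^sup>2 + f\<^sup>2 = A * c\<^sup>2 * (A * a\<^sup>2 + m * f\<^sup>2) - f\<^sup>2 * (m * A * c\<^sup>2 - 1)"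
    by (simp add: algebra_simps power2_eq_square)
  then have "int p dvd (A * a * c)\<^sup>2 + f\<^sup>2" using dvd square by simp
  then show pf: "int p dvd f" using prime_3mod4_dvd_sum_squares[OF p] by blast
  have pp: "prime (int p)" using p(1) by simp
  have "\<not> int p dvd A"
  proof
    assume "int p dvd A"
    then have "int p dvd m * A * c\<^sup>2" by simp
    then have "int p dvd m * A * c\<^sup>2 - (m * A * c\<^sup>2 - 1)" using square by (rule dvd_diff)
    then have "int p dvd 1" by simp
    then show False using pp by simp
  qed
  moreover have "int p dvd A * a\<^sup>2" using dvd pf by (simp add: dvd_add_left_iff power2_eq_square)
  ultimately show "int p dvd a" using pp by (simp add: prime_dvd_mult_iff prime_dvd_power_iff)
qed

lemma diag_form_descent:
  fixes p A D m :: int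
  assumes p: "prime p" and pD: "p dvd D" "\<not> p\<^sup>2 dvd D"
    and aniso: "\<And>a f. p dvd A * a\<^sup>2 + m * f\<^sup>2 \<Longrightarrow> p dvd a \<and> p dvd f"
  shows "A * a\<^sup>2 + D * b\<^sup>2 + m * f\<^sup>2 = 0 \<Longrightarrow> a = 0 \<and> b = 0 \<and> f = 0"
proof (induction "nat (\<bar>a\<bar> + \<bar>b\<bar> + \<bar>f\<bar>)" arbitrary: a b f rule: less_induct)
  case less
  have "A * a\<^sup>2 + m * f\<^sup>2 = - (D * b\<^sup>2)" using less.prems by linarith
  then have "p dvd A * a\<^sup>2 + m * f\<^sup>2" using pD(1) by simp
  then obtain a' f' where a: "a = p * a'" and f: "f = p * f'" using aniso by (meson dvdE)
  have "p\<^sup>2 dvd D * b\<^sup>2"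
  proof -
    have "D * b\<^sup>2 = - (p\<^sup>2 * (A * a'\<^sup>2 + m * f'\<^sup>2))"
      using less.prems a f by (simp add: algebra_simps power2_eq_square)
    then show ?thesis by simp
  qed
  have "p dvd b"
  proof (rule ccontr)
    assume "\<not> p dvd b"
    then have "coprime (p\<^sup>2) (b\<^sup>2)" using p by (simp add: prime_imp_coprime)
    then show False using \<open>p\<^sup>2 dvd D * b\<^sup>2\<close> pD(2) by (simp add: coprime_dvd_mult_left_iff)
  qed
  then obtain b' where b: "b = p * b'" by blast
  have "p\<^sup>2 * (A * a'\<^sup>2 + D * b'\<^sup>2 + m * f'\<^sup>2) = 0"
    using less.prems a b f by (simp add: algebra_simps power2_eq_square)
  then have smaller: "A * a'\<^sup>2 + D * b'\<^sup>2 + m * f'\<^sup>2 = 0" using p by simp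
  show ?case
  proof (rule ccontr)
    assume nonzero: "\<not> (a = 0 \<and> b = 0 \<and> f = 0)"
    have sum: "\<bar>a\<bar> + \<bar>b\<bar> + \<bar>f\<bar> = \<bar>p\<bar> * (\<bar>a'\<bar> + \<bar>b'\<bar> + \<bar>f'\<bar>)"
      unfolding a b f by (simp add: abs_mult algebra_simps)
    have "\<bar>a'\<bar> + \<bar>b'\<bar> + \<bar>f'\<bar> > 0" using nonzero unfolding a b f by auto
    moreover have "\<bar>p\<bar> > 1" using p by (simp add: prime_int_iff)
    ultimately have "\<bar>a'\<bar> + \<bar>b'\<bar> + \<bar>f'\<bar> < \<bar>a\<bar> + \<bar>b\<bar> + \<bar>f\<bar>"
      unfolding sum by (simp add: mult_less_cancel_right1)
    then have "nat (\<bar>a'\<bar> + \<bar>b'\<bar> + \<bar>f'\<bar>) < nat (\<bar>a\<bar> + \<bar>b\<bar> + \<bar>f\<bar>)" by simp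
    then have "a' = 0 \<and> b' = 0 \<and> f' = 0" using less.hyps smaller by blast
    then show False using nonzero unfolding a b f by simp
  qed
qed

lemma scaled_squares_cong_half_range_imp_eq:
  fixes p :: nat and c x y :: int
  assumes p: "prime p" and c: "\<not> int p dvd c"
    and x: "0 \<le> x" "2 * x < int p" and y: "0 \<le> y" "2 * y < int p"
    and dvd: "int p dvd c * x\<^sup>2 - c * y\<^sup>2"
  shows "x = y"
proof -
  have pp: "prime (int p)" using p by simp
  have "c * x\<^sup>2 - c * y\<^sup>2 = c * ((x - y) * (x + y))" by (simp add: algebra_simps power2_eq_square)
  then have "int p dvd x - y \<or> int p dvd x + y" using dvd c pp by (simp add: prime_dvd_mult_iff)
  moreover have "\<bar>x - y\<bar> < int p" "\<bar>x + y\<bar> < int p" using x y by linarith+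
  moreover have "d = 0" if "int p dvd d" "\<bar>d\<bar> < int p" for d
    using that dvd_imp_le_int[of d "int p"] by force
  ultimately have "x - y = 0 \<or> x + y = 0" by blast
  then show ?thesis using x y by linarith
qed

lemma diag_form_zero_mod_prime:
  fixes p :: nat and a1 a2 a3 :: int
  assumes p: "prime p" "p > 2" and a1: "\<not> int p dvd a1" and a2: "\<not> int p dvd a2"
  shows "\<exists>x y. int p dvd a1 * x\<^sup>2 + a2 * y\<^sup>2 + a3"
proof (rule ccontr)
  assume no_zero: "\<not> ?thesis"
  define H where "H = (int p - 1) div 2"
  define I where "I = {0..H}"
  define f where "f x = (a1 * x\<^sup>2) mod int p" for x
  define g where "g y = (- a3 - a2 * y\<^sup>2) mod int p" for y
  \<comment> \<open>Pigeonhole: \<open>f\<close> and \<open>g\<close> each take \<open>(p + 1) / 2\<close> distinct residues on \<open>I\<close>.\<close>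
  have "odd p" using p prime_odd_nat by blast
  then have pH: "int p = 2 * H + 1" unfolding H_def by presburger
  have half: "0 \<le> x \<and> 2 * x < int p" if "x \<in> I" for x using that pH unfolding I_def by auto
  have "inj_on f I"
  proof (rule inj_onI)
    fix x y assume "x \<in> I" "y \<in> I" "f x = f y"
    then show "x = y" using scaled_squares_cong_half_range_imp_eq[OF p(1) a1] half
      unfolding f_def by (simp add: mod_eq_dvd_iff)
  qed
  moreover have "inj_on g I"
  proof (rule inj_onI)
    fix x y assume "x \<in> I" "y \<in> I" "g x = g y"
    then have "int p dvd a2 * y\<^sup>2 - a2 * x\<^sup>2" unfolding g_def by (simp add: mod_eq_dvd_iff)
    with half[OF \<open>y \<in> I\<close>] half[OF \<open>x \<in> I\<close>]
    show "x = y" using scaled_squares_cong_half_range_imp_eq[OF p(1) a2, of y x] by simp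
  qed
  moreover have "f ` I \<inter> g ` I = {}"
  proof (rule ccontr)
    assume "f ` I \<inter> g ` I \<noteq> {}"
    then obtain x y where "f x = g y" by blast
    then have "int p dvd a1 * x\<^sup>2 - (- a3 - a2 * y\<^sup>2)" unfolding f_def g_def by (simp add: mod_eq_dvd_iff)
    then show False using no_zero by (simp add: algebra_simps)
  qed
  ultimately have "card (f ` I \<union> g ` I) = 2 * card I"
    by (simp add: I_def card_Un_disjoint card_image)
  moreover have "f ` I \<union> g ` I \<subseteq> {0..<int p}" unfolding f_def g_def using p by auto
  then have "card (f ` I \<union> g ` I) \<le> card {0..<int p}" by (intro card_mono) simp_all
  ultimately show False using pH unfolding I_def by simp
qed

lemma diag_form_exact_prime_divisor:
  fixes p :: nat and a1 a2 a3 :: int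
  assumes p: "prime p" "p > 2" and a: "\<not> int p dvd a1" "\<not> int p dvd a2" "\<not> int p dvd a3"
  shows "\<exists>x y z. int p dvd a1 * x\<^sup>2 + a2 * y\<^sup>2 + a3 * z\<^sup>2
      \<and> \<not> (int p)\<^sup>2 dvd a1 * x\<^sup>2 + a2 * y\<^sup>2 + a3 * z\<^sup>2"
proof -
  define P where "P = int p"
  obtain x y where xy: "P dvd a1 * x\<^sup>2 + a2 * y\<^sup>2 + a3"
    using diag_form_zero_mod_prime[OF p a(1,2)] unfolding P_def by blast
  show ?thesis
  proof (cases "P\<^sup>2 dvd a1 * x\<^sup>2 + a2 * y\<^sup>2 + a3")
    case False
    then show ?thesis using xy unfolding P_def by (metis mult.right_neutral one_power2)
  next
    case True
    \<comment> \<open>Moving \<open>z\<close> from \<open>1\<close> to \<open>1 + p\<close> changes the value by \<open>2 a3 p\<close> modulo \<open>p\<^sup>2\<close>.\<close>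
    have eq: "a1 * x\<^sup>2 + a2 * y\<^sup>2 + a3 * (1 + P)\<^sup>2 = (a1 * x\<^sup>2 + a2 * y\<^sup>2 + a3) + P * (2 * a3) + P\<^sup>2 * a3"
      by (simp add: algebra_simps power2_eq_square)
    have "P dvd a1 * x\<^sup>2 + a2 * y\<^sup>2 + a3 * (1 + P)\<^sup>2" unfolding eq using xy
      by (simp add: power2_eq_square)
    moreover have "\<not> P\<^sup>2 dvd a1 * x\<^sup>2 + a2 * y\<^sup>2 + a3 * (1 + P)\<^sup>2"
    proof
      assume "P\<^sup>2 dvd a1 * x\<^sup>2 + a2 * y\<^sup>2 + a3 * (1 + P)\<^sup>2"
      then have "P\<^sup>2 dvd P * (2 * a3)" unfolding eq using True
        by (metis dvd_add_left_iff dvd_add_right_iff dvd_triv_left)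
      then have "P dvd 2 * a3" using p unfolding P_def by (simp add: power2_eq_square)
      then have "P dvd 2" using p a(3) unfolding P_def by (simp add: prime_dvd_mult_iff)
      then have "p dvd 2" unfolding P_def by presburger
      then show False using p dvd_imp_le[of p 2] by simp
    qed
    ultimately show ?thesis unfolding P_def by blast
  qed
qed

lemma exact_dvd_cong:
  fixes p a b :: int
  assumes "[a = b] (mod p\<^sup>2)" and "p dvd b" and "\<not> p\<^sup>2 dvd b"
  shows "p dvd a \<and> \<not> p\<^sup>2 dvd a"
proof -
  have diff: "p\<^sup>2 dvd a - b" using assms(1) by (simp add: cong_iff_dvd_diff)
  then have "p dvd (a - b) + b" using assms(2) by (intro dvd_add) (auto simp: power2_eq_square)
  moreover have "\<not> p\<^sup>2 dvd a"
  proof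
    assume "p\<^sup>2 dvd a"
    then have "p\<^sup>2 dvd a - (a - b)" using diff by (rule dvd_diff)
    then show False using assms(3) by simp
  qed
  ultimately show ?thesis by simp
qed

lemma exact_dvd_of_square_mult:
  fixes p g D :: int
  assumes p: "prime p" and "p dvd g\<^sup>2 * D" and "\<not> p\<^sup>2 dvd g\<^sup>2 * D"
  shows "p dvd D \<and> \<not> p\<^sup>2 dvd D"
proof -
  have "\<not> p dvd g"
  proof
    assume "p dvd g"
    then have "p\<^sup>2 dvd g\<^sup>2 * D" by (simp add: dvd_mult2)
    then show False using assms(3) by simp
  qed
  then have "\<not> p dvd g\<^sup>2" using p prime_dvd_power by blast
  then show ?thesis using assms p by (auto simp: prime_dvd_mult_iff dvd_mult)
qed

lemma chinese_remainder_prime_squares: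
  fixes S :: "nat set" and u :: "nat \<Rightarrow> int"
  assumes fin: "finite S" and primes: "\<forall>p\<in>S. prime p"
  shows "\<exists>X::int. \<forall>p\<in>S. [X = u p] (mod (int p)\<^sup>2)"
proof -
  define r where "r p = nat (u p mod (int p)\<^sup>2)" for p
  have "\<forall>p\<in>S. \<forall>q\<in>S. p \<noteq> q \<longrightarrow> coprime (p\<^sup>2) (q\<^sup>2)"
    using primes by (simp add: primes_coprime)
  then obtain X where X: "\<forall>p\<in>S. [X = r p] (mod p\<^sup>2)"
    using chinese_remainder_nat[OF fin, of "\<lambda>p. p\<^sup>2" r] by blast
  have "[int X = u p] (mod (int p)\<^sup>2)" if "p \<in> S" for p
  proof -
    have "(int p)\<^sup>2 > 0" using primes that prime_gt_0_nat by simp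
    then have "int (r p) = u p mod (int p)\<^sup>2" unfolding r_def by simp
    moreover have "[int X = int (r p)] (mod (int p)\<^sup>2)"
      using X that by (simp add: cong_int_iff[symmetric])
    ultimately show ?thesis by (simp add: cong_def)
  qed
  then show ?thesis by blast
qed

lemma diag_form_negative_exact_divisors:
  fixes S :: "nat set" and a1 a2 a3 :: int
  assumes fin: "finite S" and a1: "a1 < 0"
    and primes: "\<forall>p\<in>S. prime p \<and> p > 2 \<and> \<not> int p dvd a1 \<and> \<not> int p dvd a2 \<and> \<not> int p dvd a3"
  shows "\<exists>x y z. a1 * x\<^sup>2 + a2 * y\<^sup>2 + a3 * z\<^sup>2 < 0 \<and>
    (\<forall>p\<in>S. int p dvd a1 * x\<^sup>2 + a2 * y\<^sup>2 + a3 * z\<^sup>2 \<and> \<not> (int p)\<^sup>2 dvd a1 * x\<^sup>2 + a2 * y\<^sup>2 + a3 * z\<^sup>2)"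
proof -
  define Q where "Q x y z = a1 * x\<^sup>2 + a2 * y\<^sup>2 + a3 * z\<^sup>2" for x y z
  have "\<forall>p\<in>S. \<exists>x y z. int p dvd Q x y z \<and> \<not> (int p)\<^sup>2 dvd Q x y z"
    unfolding Q_def using primes by (simp add: diag_form_exact_prime_divisor)
  then obtain tx ty tz
    where t: "\<forall>p\<in>S. int p dvd Q (tx p) (ty p) (tz p) \<and> \<not> (int p)\<^sup>2 dvd Q (tx p) (ty p) (tz p)"
    by metis
  have prime_S: "\<forall>p\<in>S. prime p" using primes by blast
  obtain X0 Y Z where crt: "\<forall>p\<in>S. [X0 = tx p] (mod (int p)\<^sup>2)"
    "\<forall>p\<in>S. [Y = ty p] (mod (int p)\<^sup>2)" "\<forall>p\<in>S. [Z = tz p] (mod (int p)\<^sup>2)"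
    using chinese_remainder_prime_squares[OF fin prime_S] by meson
  \<comment> \<open>Shifting \<open>X0\<close> by a multiple of \<open>R\<close> keeps the congruences and makes \<open>a1 X\<^sup>2\<close> dominate.\<close>
  define R where "R = (\<Prod>p\<in>S. (int p)\<^sup>2)"
  define c where "c = \<bar>a2 * Y\<^sup>2 + a3 * Z\<^sup>2\<bar>"
  define X where "X = X0 + R * (\<bar>X0\<bar> + c + 1)"
  have "R \<ge> 1" unfolding R_def using prime_S by (auto intro!: prod_ge_1 one_le_power simp: Suc_le_eq prime_gt_0_nat)
  then have "R * (\<bar>X0\<bar> + c + 1) \<ge> \<bar>X0\<bar> + c + 1" unfolding c_def
    by (simp add: mult_le_cancel_right1)
  then have "X \<ge> c + 1" unfolding X_def by linarith
  then have "X\<^sup>2 \<ge> c + 1" using mult_mono[of 1 X "c + 1" X] c_def by (simp add: power2_eq_square)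
  moreover have "a1 * X\<^sup>2 \<le> - (X\<^sup>2)" using mult_right_mono[of a1 "-1" "X\<^sup>2"] a1 by simp
  moreover have "a2 * Y\<^sup>2 + a3 * Z\<^sup>2 \<le> c" unfolding c_def by simp
  ultimately have "Q X Y Z < 0" unfolding Q_def by linarith
  moreover have "int p dvd Q X Y Z \<and> \<not> (int p)\<^sup>2 dvd Q X Y Z" if "p \<in> S" for p
  proof (rule exact_dvd_cong)
    have "(int p)\<^sup>2 dvd R" unfolding R_def using fin that by (rule dvd_prodI)
    then have "[X = X0] (mod (int p)\<^sup>2)" unfolding X_def by (simp add: cong_iff_dvd_diff)
    then have "[X = tx p] (mod (int p)\<^sup>2)" using crt(1) that cong_trans by blast
    then show "[Q X Y Z = Q (tx p) (ty p) (tz p)] (mod (int p)\<^sup>2)"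
      unfolding Q_def using crt that by (intro cong_add cong_mult cong_refl cong_pow) auto
  qed (use t that in auto)
  ultimately show ?thesis unfolding Q_def by blast
qed

section \<open>Integral symmetric bilinear forms\<close>

definition bilR :: "('n::finite \<Rightarrow> 'n \<Rightarrow> int) \<Rightarrow> real^'n \<Rightarrow> real^'n \<Rightarrow> real" where
  "bilR B x y = (\<Sum>i\<in>UNIV. \<Sum>j\<in>UNIV. x$i * real_of_int (B i j) * y$j)"

definition nondegenerate :: "('n::finite \<Rightarrow> 'n \<Rightarrow> int) \<Rightarrow> bool" where
  "nondegenerate B \<longleftrightarrow> (\<forall>x. (\<forall>y. bil B x y = 0) \<longrightarrow> x = 0)"

lemma qfR_eq_bilR: "qfR B x = bilR B x x"
  unfolding qfR_def bilR_def by simp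

lemma bil_sym: "symmetric_form B \<Longrightarrow> bil B x y = bil B y x"
  unfolding bil_def symmetric_form_def
  by (subst sum.swap) (simp add: mult.commute mult.left_commute)

lemma bilR_sym: "symmetric_form B \<Longrightarrow> bilR B x y = bilR B y x"
  unfolding bilR_def symmetric_form_def
  by (subst sum.swap) (simp add: mult.commute mult.left_commute)

lemma bil_add_left: "bil B (x + y) z = bil B x z + bil B y z"
  unfolding bil_def by (simp add: algebra_simps sum.distrib)

lemma bil_add_right: "bil B z (x + y) = bil B z x + bil B z y"
  unfolding bil_def by (simp add: algebra_simps sum.distrib)

lemma bil_diff_left: "bil B (x - y) z = bil B x z - bil B y z"
  unfolding bil_def by (simp add: algebra_simps sum_subtractf)

lemma bil_diff_right: "bil B z (x - y) = bil B z x - bil B z y"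
  unfolding bil_def by (simp add: algebra_simps sum_subtractf)

lemma bil_smult_left: "bil B (k *s x) y = k * bil B x y"
  unfolding bil_def by (simp add: algebra_simps sum_distrib_left)

lemma bil_smult_right: "bil B y (k *s x) = k * bil B y x"
  unfolding bil_def by (simp add: algebra_simps sum_distrib_left)

lemma bil_zero_left [simp]: "bil B 0 y = 0"
  unfolding bil_def by simp

lemma bil_zero_right [simp]: "bil B y 0 = 0"
  unfolding bil_def by simp

lemma bil_sum_right: "bil B y (\<Sum>e\<in>E. f e *s e) = (\<Sum>e\<in>E. f e * bil B y e)"
  by (induction E rule: infinite_finite_induct) (simp_all add: bil_add_right bil_smult_right)

lemma qf_smult: "qf B (k *s x) = k\<^sup>2 * qf B x"
  unfolding qf_def by (simp add: bil_smult_left bil_smult_right power2_eq_square)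

lemma qf_add: "symmetric_form B \<Longrightarrow> qf B (x + y) = qf B x + 2 * bil B x y + qf B y"
  unfolding qf_def using bil_sym[of B y x] by (simp add: bil_add_left bil_add_right)

lemma qf_add_orthogonal: "symmetric_form B \<Longrightarrow> bil B x y = 0 \<Longrightarrow> qf B (x + y) = qf B x + qf B y"
  by (simp add: qf_add)

lemma qf_orthogonal_triple:
  assumes "symmetric_form B" and "bil B w1 w2 = 0" and "bil B w1 w3 = 0" and "bil B w2 w3 = 0"
  shows "qf B (x *s w1 + y *s w2 + z *s w3) = qf B w1 * x\<^sup>2 + qf B w2 * y\<^sup>2 + qf B w3 * z\<^sup>2"
proof -
  have "bil B (x *s w1) (y *s w2) = 0" "bil B (x *s w1 + y *s w2) (z *s w3) = 0"
    using assms(2-4) by (simp_all add: bil_add_left bil_smult_left bil_smult_right)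
  then show ?thesis by (simp add: qf_add_orthogonal[OF assms(1)] qf_smult mult.commute)
qed

lemma bilR_add_left: "bilR B (x + y) z = bilR B x z + bilR B y z"
  unfolding bilR_def by (simp add: algebra_simps sum.distrib)

lemma bilR_add_right: "bilR B z (x + y) = bilR B z x + bilR B z y"
  unfolding bilR_def by (simp add: algebra_simps sum.distrib)

lemma bilR_scaleR_left: "bilR B (k *\<^sub>R x) y = k * bilR B x y"
  unfolding bilR_def by (simp add: algebra_simps sum_distrib_left)

lemma bilR_scaleR_right: "bilR B y (k *\<^sub>R x) = k * bilR B y x"
  unfolding bilR_def by (simp add: algebra_simps sum_distrib_left)

lemma bilR_to_real: "bilR B (to_real x) (to_real y) = real_of_int (bil B x y)"
  unfolding bilR_def bil_def to_real_def by simp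

lemma to_real_smult: "to_real (k *s x) = real_of_int k *\<^sub>R to_real x"
  unfolding to_real_def by (simp add: vec_eq_iff)

lemma to_real_add: "to_real (x + y) = to_real x + to_real y"
  unfolding to_real_def by (simp add: vec_eq_iff)

lemma to_real_eq_0_iff [simp]: "to_real x = 0 \<longleftrightarrow> x = 0"
  unfolding to_real_def by (simp add: vec_eq_iff)

lemma to_real_sum: "to_real (\<Sum>e\<in>E. f e) = (\<Sum>e\<in>E. to_real (f e))"
  by (induction E rule: infinite_finite_induct) (simp_all add: to_real_add)

lemma to_real_axis: "to_real (axis i 1) = axis i 1"
  unfolding to_real_def axis_def by (simp add: vec_eq_iff)

lemma subspaces_Int_nonzero:
  fixes S T :: "(real^'n) set"
  assumes "subspace S" and "subspace T" and "dim S + dim T > CARD('n)"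
  shows "\<exists>y \<in> S \<inter> T. y \<noteq> 0"
proof (rule ccontr)
  assume "\<not> ?thesis"
  then have "S \<inter> T \<subseteq> {0}" by auto
  then have "dim (S \<inter> T) = 0" by (simp add: dim_eq_0)
  moreover have "dim {x + y |x y. x \<in> S \<and> y \<in> T} \<le> CARD('n)" by (rule dim_subset_UNIV_cart)
  ultimately show False using dim_sums_Int[OF assms(1,2)] assms(3) by linarith
qed

lemma has_signature_bilR_radical:
  fixes B :: "'n::finite \<Rightarrow> 'n \<Rightarrow> int"
  assumes sym: "symmetric_form B" and sign: "has_signature B p m"
    and radical: "\<forall>y. bilR B x y = 0"
  shows "x = 0"
proof (rule ccontr)
  assume x0: "x \<noteq> 0"
  obtain V W :: "(real^'n) set" where V: "subspace V" "dim V = p" "\<forall>x\<in>V. x \<noteq> 0 \<longrightarrow> qfR B x > 0"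
    and W: "subspace W" "dim W = m" "\<forall>x\<in>W. x \<noteq> 0 \<longrightarrow> qfR B x < 0"
    and pm: "p + m = CARD('n)"
    using sign unfolding has_signature_def by blast
  have qx: "qfR B x = 0" using radical by (simp add: qfR_eq_bilR)
  have span_V: "span V = V" using V(1) by (simp add: span_eq_iff)
  have "x \<notin> span V" unfolding span_V using V(3) x0 qx by auto
  then have "dim (span (insert x V)) = p + 1" using V(2) by (simp add: dim_insert)
  then have "dim (span (insert x V)) + dim W > CARD('n)" using W(2) pm by simp
  then obtain y where y: "y \<in> span (insert x V)" "y \<in> W" "y \<noteq> 0"
    using subspaces_Int_nonzero[of "span (insert x V)" W] W(1) by auto
  then obtain k where "y - k *\<^sub>R x \<in> V" unfolding span_insert span_V by auto
  then obtain s where s: "s \<in> V" and ys: "y = s + k *\<^sub>R x" by (metis diff_add_cancel)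
  have "qfR B y = qfR B s"
    using radical bilR_sym[OF sym, of s x] unfolding qfR_eq_bilR ys
    by (simp add: bilR_add_left bilR_add_right bilR_scaleR_left bilR_scaleR_right)
  moreover have "qfR B s \<ge> 0" using V(3) s by (cases "s = 0") (auto simp: qfR_def less_imp_le)
  moreover have "qfR B y < 0" using W(3) y by blast
  ultimately show False by simp
qed

lemma has_signature_nondegenerate:
  assumes sym: "symmetric_form B" and sign: "has_signature B p m"
  shows "nondegenerate B"
  unfolding nondegenerate_def
proof (intro allI impI)
  fix x assume radical: "\<forall>z. bil B x z = 0"
  have "bilR B (to_real x) y = 0" for y
  proof -
    have "bil B x (axis j 1) = (\<Sum>i\<in>UNIV. x$i * B i j)" for j
      unfolding bil_def axis_def by (simp add: if_distrib cong: if_cong)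
    then have "bilR B (to_real x) y = (\<Sum>j\<in>UNIV. real_of_int (bil B x (axis j 1)) * y$j)"
      unfolding bilR_def to_real_def by (subst sum.swap) (simp add: sum_distrib_right)
    then show ?thesis using radical by simp
  qed
  then have "to_real x = 0" using has_signature_bilR_radical[OF sym sign] by blast
  then show "x = 0" by simp
qed

lemma CARD_le_card_if_scaled_into_span:
  fixes E :: "(int^'n::finite) set" and c :: int
  assumes fin: "finite E" and c: "c \<noteq> 0" and span: "\<And>y. \<exists>f. c *s y = (\<Sum>e\<in>E. f e *s e)"
  shows "CARD('n) \<le> card E"
proof -
  define T where "T = to_real ` E"
  have in_span: "to_real y \<in> span T" for y
  proof -
    obtain f where "c *s y = (\<Sum>e\<in>E. f e *s e)" using span by blast
    then have "real_of_int c *\<^sub>R to_real y = (\<Sum>e\<in>E. real_of_int (f e) *\<^sub>R to_real e)"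
      by (metis (no_types, lifting) sum.cong to_real_smult to_real_sum)
    also have "\<dots> \<in> span T" unfolding T_def by (intro span_sum span_scale span_base) auto
    finally have "inverse (real_of_int c) *\<^sub>R (real_of_int c *\<^sub>R to_real y) \<in> span T" by (rule span_scale)
    then show ?thesis using c by simp
  qed
  have "x \<in> span T" for x :: "real^'n"
  proof -
    have "x = (\<Sum>i\<in>UNIV. x$i *s axis i 1)" by (simp add: basis_expansion)
    also have "\<dots> \<in> span T" using in_span[of "axis _ 1"]
      by (intro span_sum) (simp add: to_real_axis scalar_mult_eq_scaleR span_scale)
    finally show ?thesis .
  qed
  then have "dim (UNIV :: (real^'n) set) \<le> card T" using fin unfolding T_def by (intro dim_le_card) auto
  also have "card T \<le> card E" unfolding T_def using fin by (rule card_image_le)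
  finally show ?thesis by simp
qed

lemma exists_anisotropic_orthogonal:
  fixes B :: "'n::finite \<Rightarrow> 'n \<Rightarrow> int" and E :: "(int^'n) set"
  assumes sym: "symmetric_form B" and nondeg: "nondegenerate B" and fin: "finite E"
    and aniso: "\<forall>e\<in>E. qf B e \<noteq> 0"
    and orth: "\<forall>e\<in>E. \<forall>e'\<in>E. e \<noteq> e' \<longrightarrow> bil B e e' = 0"
    and card: "card E < CARD('n)"
  shows "\<exists>y. (\<forall>e\<in>E. bil B e y = 0) \<and> qf B y \<noteq> 0"
proof (rule ccontr)
  assume "\<not> ?thesis"
  then have iso: "qf B y = 0" if "\<forall>e\<in>E. bil B e y = 0" for y using that by blast
  define c where "c = (\<Prod>e\<in>E. qf B e)"
  have c: "c \<noteq> 0" using aniso fin by (simp add: c_def)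
  define cf where "cf e = c div qf B e" for e
  have cf: "cf e * qf B e = c" if "e \<in> E" for e
    using dvd_prodI[OF fin that, of "qf B"] unfolding cf_def c_def by simp
  define S where "S y = (\<Sum>e\<in>E. (bil B e y * cf e) *s e)" for y
  define pr where "pr y = c *s y - S y" for y
  \<comment> \<open>\<open>pr\<close> is \<open>c\<close> times the orthogonal projection onto the complement of \<open>E\<close>.\<close>
  have pr_orth: "bil B e (pr y) = 0" if "e \<in> E" for e y
  proof -
    have "bil B e (S y) = (\<Sum>e'\<in>E. (bil B e' y * cf e') * bil B e e')"
      unfolding S_def by (rule bil_sum_right)
    also have "\<dots> = (bil B e y * cf e) * bil B e e + (\<Sum>e'\<in>E - {e}. (bil B e' y * cf e') * bil B e e')"
      using fin that by (simp add: sum.remove)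
    also have "(\<Sum>e'\<in>E - {e}. (bil B e' y * cf e') * bil B e e') = 0"
      using orth that by (intro sum.neutral) auto
    finally show ?thesis
      using cf[OF that] unfolding pr_def qf_def by (simp add: bil_diff_right bil_smult_right algebra_simps)
  qed
  have pr_pr: "bil B (pr y) (pr z) = 0" for y z
  proof -
    have "pr y + pr z = pr (y + z)"
      unfolding pr_def S_def by (simp add: bil_add_right vector_add_ldistrib vector_sadd_rdistrib sum.distrib algebra_simps)
    then have "qf B (pr y + pr z) = 0" using iso pr_orth by simp
    then show ?thesis using qf_add[OF sym] iso pr_orth by simp
  qed
  have scaled: "c *s y = S y" for y
  proof -
    have "c * bil B (pr y) z = 0" for z
    proof -
      have "bil B (pr y) (S z) = (\<Sum>e\<in>E. (bil B e z * cf e) * bil B (pr y) e)"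
        unfolding S_def by (rule bil_sum_right)
      also have "\<dots> = 0" using pr_orth bil_sym[OF sym] by (intro sum.neutral) auto
      finally have "bil B (pr y) (S z) = 0" .
      then show ?thesis using pr_pr[of y z] unfolding pr_def[of z]
        by (simp add: bil_diff_right bil_smult_right)
    qed
    then have "pr y = 0" using nondeg c unfolding nondegenerate_def by simp
    then show ?thesis unfolding pr_def by simp
  qed
  have "CARD('n) \<le> card E"
  proof (rule CARD_le_card_if_scaled_into_span[OF fin c])
    show "\<exists>f. c *s y = (\<Sum>e\<in>E. f e *s e)" for y using scaled[of y] unfolding S_def by (intro exI[of _ "\<lambda>e. bil B e y * cf e"])
  qed
  then show False using card by simp
qed

lemma floor_scaled_LIMSEQ: "(\<lambda>k. real_of_int \<lfloor>real k * t\<rfloor> / real k) \<longlonglongrightarrow> t"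
proof (rule tendsto_sandwich[where f = "\<lambda>k. t - 1 / real k" and h = "\<lambda>k. t"])
  show "\<forall>\<^sub>F k in sequentially. t - 1 / real k \<le> real_of_int \<lfloor>real k * t\<rfloor> / real k"
  proof (rule eventually_sequentiallyI[of 1])
    fix k :: nat assume "1 \<le> k"
    then have "t - 1 / real k = (real k * t - 1) / real k" by (simp add: field_simps)
    also have "\<dots> \<le> real_of_int \<lfloor>real k * t\<rfloor> / real k" by (intro divide_right_mono) linarith+
    finally show "t - 1 / real k \<le> real_of_int \<lfloor>real k * t\<rfloor> / real k" .
  qed
  show "\<forall>\<^sub>F k in sequentially. real_of_int \<lfloor>real k * t\<rfloor> / real k \<le> t"
  proof (rule eventually_sequentiallyI[of 1])
    fix k :: nat assume "1 \<le> k"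
    moreover have "real_of_int \<lfloor>real k * t\<rfloor> \<le> real k * t" by linarith
    ultimately show "real_of_int \<lfloor>real k * t\<rfloor> / real k \<le> t" by (simp add: field_simps)
  qed
  show "(\<lambda>k. t - 1 / real k) \<longlonglongrightarrow> t" using tendsto_diff[OF tendsto_const lim_1_over_n, of t] by simp
qed simp

lemma exists_negative_vector:
  fixes B :: "'n::finite \<Rightarrow> 'n \<Rightarrow> int"
  assumes sign: "has_signature B p m" and m: "m > 0"
  shows "\<exists>w. qf B w < 0"
proof (rule ccontr)
  assume "\<not> ?thesis"
  then have nonneg: "qf B w \<ge> 0" for w by (simp add: not_less)
  obtain W :: "(real^'n) set" where W: "dim W = m" "\<forall>x\<in>W. x \<noteq> 0 \<longrightarrow> qfR B x < 0"
    using sign unfolding has_signature_def by blast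
  then obtain x where x: "x \<in> W" "x \<noteq> 0" using m dim_eq_0[of W] by auto
  \<comment> \<open>Approximate \<open>x\<close> by the rational vectors \<open>z k = y k / k\<close> with \<open>y k\<close> integral.\<close>
  define y where "y k = (\<chi> i. \<lfloor>real k * x$i\<rfloor>)" for k :: nat
  define z where "z k = (\<chi> i. real_of_int \<lfloor>real k * x$i\<rfloor> / real k)" for k :: nat
  have "qfR B (z k) = real_of_int (qf B (y k)) / (real k)\<^sup>2" for k
    unfolding qfR_def qf_def bil_def z_def y_def by (simp add: sum_divide_distrib power2_eq_square)
  then have "qfR B (z k) \<ge> 0" for k using nonneg[of "y k"] by simp
  moreover have "(\<lambda>k. z k $ i) \<longlonglongrightarrow> x$i" for i unfolding z_def using floor_scaled_LIMSEQ by simp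
  then have "(\<lambda>k. qfR B (z k)) \<longlonglongrightarrow> qfR B x"
    unfolding qfR_def by (intro tendsto_sum tendsto_mult tendsto_const)
  ultimately have "qfR B x \<ge> 0" by (intro LIMSEQ_le_const) auto
  then show False using W(2) x by fastforce
qed

lemma exists_orthogonal_triple:
  fixes B :: "'n::finite \<Rightarrow> 'n \<Rightarrow> int"
  assumes sym: "symmetric_form B" and sign: "has_signature B p m" and m: "m > 0"
    and n: "CARD('n) \<ge> 4" and h: "qf B h > 0"
  shows "\<exists>w1 w2 w3. bil B h w1 = 0 \<and> bil B h w2 = 0 \<and> bil B h w3 = 0
    \<and> bil B w1 w2 = 0 \<and> bil B w1 w3 = 0 \<and> bil B w2 w3 = 0
    \<and> qf B w1 < 0 \<and> qf B w2 \<noteq> 0 \<and> qf B w3 \<noteq> 0"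
proof -
  have nondeg: "nondegenerate B" using has_signature_nondegenerate[OF sym sign] .
  obtain w where w: "qf B w < 0" using exists_negative_vector[OF sign m] by blast
  define w1 where "w1 = qf B h *s w - bil B h w *s h"
  have hw1: "bil B h w1 = 0"
    unfolding w1_def qf_def by (simp add: bil_diff_right bil_smult_right mult.commute)
  have "qf B w1 = qf B h * (qf B h * qf B w - (bil B h w)\<^sup>2)"
    using bil_sym[OF sym, of h w] unfolding w1_def qf_def
    by (simp add: bil_diff_left bil_diff_right bil_smult_right bil_smult_left power2_eq_square algebra_simps)
  also have "\<dots> < 0"
  proof (intro mult_pos_neg)
    have "qf B h * qf B w < 0" using h w by (rule mult_pos_neg)
    then show "qf B h * qf B w - (bil B h w)\<^sup>2 < 0" by (smt (verit) zero_le_power2)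
  qed (use h in simp)
  finally have qw1: "qf B w1 < 0" .
  have "card {h, w1} \<le> 2" by (simp add: card_insert_if)
  then have "\<exists>y. (\<forall>e\<in>{h, w1}. bil B e y = 0) \<and> qf B y \<noteq> 0"
    using hw1 h qw1 bil_sym[OF sym, of h w1] n
    by (intro exists_anisotropic_orthogonal[OF sym nondeg]) auto
  then obtain w2 where w2: "bil B h w2 = 0" "bil B w1 w2 = 0" "qf B w2 \<noteq> 0" by auto
  have "card {h, w1, w2} \<le> 3" by (simp add: card_insert_if)
  then have "\<exists>y. (\<forall>e\<in>{h, w1, w2}. bil B e y = 0) \<and> qf B y \<noteq> 0"
    using hw1 w2 h qw1 bil_sym[OF sym] n
    by (intro exists_anisotropic_orthogonal[OF sym nondeg]) auto
  then obtain w3 where "bil B h w3 = 0" "bil B w1 w3 = 0" "bil B w2 w3 = 0" "qf B w3 \<noteq> 0" by auto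
  then show ?thesis using hw1 w2 qw1 by blast
qed

lemma primitive_vec_nonzero: "primitive_vec v \<Longrightarrow> v \<noteq> 0"
  unfolding primitive_vec_def by (metis abs_0 vector_smult_lzero zero_neq_one)

lemma exists_primitive_factor:
  fixes v :: "int^'n::finite"
  assumes "v \<noteq> 0"
  shows "\<exists>g u. g \<noteq> 0 \<and> v = g *s u \<and> primitive_vec u"
proof -
  define g where "g = Gcd (range (\<lambda>i. v$i))"
  have g_dvd: "g dvd v$i" for i unfolding g_def by (rule Gcd_dvd) simp
  have g: "g \<noteq> 0" using assms unfolding g_def by (auto simp: vec_eq_iff)
  define u where "u = (\<chi> i. v$i div g)"
  have v: "v = g *s u" unfolding u_def using g_dvd by (simp add: vec_eq_iff)
  have "primitive_vec u" unfolding primitive_vec_def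
  proof (intro allI impI)
    fix k :: int and x assume "u = k *s x"
    then have "g * k dvd v$i" for i using v by (simp add: mult.assoc)
    then have "g * k dvd g" unfolding g_def by (intro Gcd_greatest) auto
    then have "g * k dvd g * 1" by simp
    then show "\<bar>k\<bar> = 1" using g by (simp only: dvd_mult_cancel_left) simp
  qed
  then show ?thesis using g v by blast
qed

section \<open>The saturation of \<open>\<int>h + \<int>v\<close>\<close>

text \<open>\<open>saturated_span h v\<close> is the primitive sublattice \<open>(\<rat>h + \<rat>v) \<inter> \<Lambda>\<close>.\<close>

definition saturated_span :: "int^'n \<Rightarrow> int^'n \<Rightarrow> (int^'n) set" where
  "saturated_span h v = {x. \<exists>f a b. f \<noteq> 0 \<and> f *s x = a *s h + b *s v}"

lemma saturated_span_left: "h \<in> saturated_span h v"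
  unfolding saturated_span_def by (rule CollectI, rule exI[of _ 1], rule exI[of _ 1], rule exI[of _ 0]) simp

lemma saturated_span_right: "v \<in> saturated_span h v"
  unfolding saturated_span_def by (rule CollectI, rule exI[of _ 1], rule exI[of _ 0], rule exI[of _ 1]) simp

lemma smult_in_saturated_span: "k *s v \<in> saturated_span h v"
  unfolding saturated_span_def by (rule CollectI, rule exI[of _ 1], rule exI[of _ 0], rule exI[of _ k]) simp

lemma primitive_sublattice_saturated_span: "primitive_sublattice (saturated_span h v)"
  unfolding primitive_sublattice_def sublattice_def
proof (intro conjI ballI allI impI)
  show "0 \<in> saturated_span h v" using smult_in_saturated_span[of 0] by simp
next
  fix x y assume "x \<in> saturated_span h v" "y \<in> saturated_span h v"
  then obtain f1 a1 b1 f2 a2 b2 where x: "f1 \<noteq> 0" "f1 *s x = a1 *s h + b1 *s v"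
    and y: "f2 \<noteq> 0" "f2 *s y = a2 *s h + b2 *s v" unfolding saturated_span_def by blast
  have "(f1 * f2) *s (x + y) = f2 *s (f1 *s x) + f1 *s (f2 *s y)"
    "(f1 * f2) *s (x - y) = f2 *s (f1 *s x) - f1 *s (f2 *s y)"
    by (simp_all add: vec_eq_iff algebra_simps)
  then have "(f1 * f2) *s (x + y) = (f2 * a1 + f1 * a2) *s h + (f2 * b1 + f1 * b2) *s v"
    "(f1 * f2) *s (x - y) = (f2 * a1 - f1 * a2) *s h + (f2 * b1 - f1 * b2) *s v"
    unfolding x(2) y(2) by (simp_all add: vec_eq_iff algebra_simps)
  moreover have "f1 * f2 \<noteq> 0" using x(1) y(1) by simp
  ultimately show "x + y \<in> saturated_span h v" "x - y \<in> saturated_span h v"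
    unfolding saturated_span_def by blast+
next
  fix k :: int and x assume "k \<noteq> 0" "k *s x \<in> saturated_span h v"
  then obtain f a b where "f \<noteq> 0" "f *s (k *s x) = a *s h + b *s v"
    unfolding saturated_span_def by blast
  then have "f * k \<noteq> 0" "(f * k) *s x = a *s h + b *s v" using \<open>k \<noteq> 0\<close> by simp_all
  then show "x \<in> saturated_span h v" unfolding saturated_span_def by blast
qed

lemma qf_saturated_span:
  assumes sym: "symmetric_form B" and hv: "bil B h v = 0" and x: "x \<in> saturated_span h v"
  shows "\<exists>f a b. f \<noteq> 0 \<and> f\<^sup>2 * qf B x = a\<^sup>2 * qf B h + b\<^sup>2 * qf B v
    \<and> (a = 0 \<and> b = 0 \<longrightarrow> x = 0)"
proof -
  obtain f a b where f: "f \<noteq> 0" and fx: "f *s x = a *s h + b *s v"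
    using x unfolding saturated_span_def by blast
  have "f\<^sup>2 * qf B x = qf B (a *s h + b *s v)" unfolding fx[symmetric] by (simp add: qf_smult)
  also have "\<dots> = a\<^sup>2 * qf B h + b\<^sup>2 * qf B v"
    using hv by (simp add: qf_add_orthogonal[OF sym] bil_smult_left bil_smult_right qf_smult)
  finally have "f\<^sup>2 * qf B x = a\<^sup>2 * qf B h + b\<^sup>2 * qf B v" .
  moreover have "a = 0 \<and> b = 0 \<longrightarrow> x = 0" using f fx by (auto simp: vec_eq_iff)
  ultimately show ?thesis using f by blast
qed

lemma saturated_span_Int_orth_compl:
  assumes hv: "bil B h v = 0" and h: "qf B h \<noteq> 0" and v: "primitive_vec v"
  shows "saturated_span h v \<inter> orth_compl B h = {k *s v | k. True}"
proof
  show "{k *s v | k. True} \<subseteq> saturated_span h v \<inter> orth_compl B h"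
    using hv smult_in_saturated_span unfolding orth_compl_def by (auto simp: bil_smult_right)
next
  show "saturated_span h v \<inter> orth_compl B h \<subseteq> {k *s v | k. True}"
  proof
    fix x assume "x \<in> saturated_span h v \<inter> orth_compl B h"
    then obtain f a b where f: "f \<noteq> 0" and fx: "f *s x = a *s h + b *s v" and hx: "bil B h x = 0"
      unfolding saturated_span_def orth_compl_def by blast
    have "a * qf B h = bil B h (f *s x)" unfolding fx qf_def using hv by (simp add: bil_add_right bil_smult_right)
    then have "a = 0" using hx h by (simp add: bil_smult_right)
    \<comment> \<open>From \<open>f x = b v\<close>: cancelling \<open>gcd f b\<close> and using that \<open>v\<close> is primitive gives \<open>f' = \<plusminus>1\<close>.\<close>
    define d where "d = gcd f b"
    have d: "d \<noteq> 0" unfolding d_def using f by simp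
    then obtain f' b' where fb: "f = f' * d" "b = b' * d" "coprime f' b'"
      unfolding d_def using gcd_coprime_exists by blast
    have "f * x$i = b * v$i" for i using fx \<open>a = 0\<close> by (simp add: vec_eq_iff)
    then have "d * (f' * x$i) = d * (b' * v$i)" for i unfolding fb(1,2) by (simp add: algebra_simps)
    then have fx': "f' * x$i = b' * v$i" for i using d by simp
    have "f' dvd b' * v$i" for i unfolding fx'[symmetric] by simp
    then have "f' dvd v$i" for i using fb(3) by (simp add: coprime_dvd_mult_right_iff)
    then have "v = f' *s (\<chi> i. v$i div f')" by (simp add: vec_eq_iff)
    then have "\<bar>f'\<bar> = 1" using v unfolding primitive_vec_def by blast
    then have "f' * f' = 1" using abs_mult_self_eq[of f'] by simp
    then have "x$i = (f' * b') * v$i" for i using fx'[of i]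
      by (metis mult.assoc mult_1)
    then have "x = (f' * b') *s v" by (simp add: vec_eq_iff)
    then show "x \<in> {k *s v | k. True}" by blast
  qed
qed

lemma lattice_rank_saturated_span:
  assumes sym: "symmetric_form B" and hv: "bil B h v = 0" and h: "qf B h > 0" and v: "v \<noteq> 0"
  shows "lattice_rank (saturated_span h v) = 2"
proof -
  have "to_real ` saturated_span h v \<subseteq> span {to_real h, to_real v}"
  proof
    fix y assume "y \<in> to_real ` saturated_span h v"
    then obtain x f a b where y: "y = to_real x" and f: "f \<noteq> 0" and fx: "f *s x = a *s h + b *s v"
      unfolding saturated_span_def by blast
    have "real_of_int f *\<^sub>R y = real_of_int a *\<^sub>R to_real h + real_of_int b *\<^sub>R to_real v"
      using arg_cong[OF fx, of to_real] unfolding y by (simp add: to_real_add to_real_smult)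
    then have "inverse (real_of_int f) *\<^sub>R (real_of_int f *\<^sub>R y)
        = inverse (real_of_int f) *\<^sub>R (real_of_int a *\<^sub>R to_real h + real_of_int b *\<^sub>R to_real v)"
      by simp
    then have "y = inverse (real_of_int f) *\<^sub>R (real_of_int a *\<^sub>R to_real h + real_of_int b *\<^sub>R to_real v)"
      using f by simp
    also have "\<dots> \<in> span {to_real h, to_real v}" by (intro span_scale span_add span_base) auto
    finally show "y \<in> span {to_real h, to_real v}" .
  qed
  moreover have "{to_real h, to_real v} \<subseteq> to_real ` saturated_span h v"
    using saturated_span_left saturated_span_right by blast
  ultimately have "span (to_real ` saturated_span h v) = span {to_real h, to_real v}"
    using span_mono span_span by (metis subset_antisym)
  moreover have "to_real h \<notin> span {to_real v}"
  proof
    assume "to_real h \<in> span {to_real v}"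
    then obtain k where k: "to_real h = k *\<^sub>R to_real v" by (auto simp: span_singleton)
    have "real_of_int (qf B h) = bilR B (to_real h) (to_real h)" unfolding qf_def bilR_to_real ..
    also have "\<dots> = k * bilR B (to_real v) (to_real h)" by (subst (1) k) (simp add: bilR_scaleR_left)
    also have "bilR B (to_real v) (to_real h) = 0"
      unfolding bilR_to_real using hv bil_sym[OF sym, of v h] by simp
    finally show False using h by simp
  qed
  then have "dim {to_real h, to_real v} = 2" using v by (simp add: dim_insert)
  ultimately show ?thesis unfolding lattice_rank_def by (metis dim_span)
qed

section \<open>Construction of the lattices\<close>

lemma primitive_part_exact_prime_divisors:
  fixes B :: "'n::finite \<Rightarrow> 'n \<Rightarrow> int"
  assumes hu: "bil B h u = 0" and neg: "qf B u < 0"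
    and exact: "\<forall>p\<in>S. prime p \<and> int p dvd qf B u \<and> \<not> (int p)\<^sup>2 dvd qf B u"
  shows "\<exists>v. bil B h v = 0 \<and> primitive_vec v \<and> qf B v < 0
    \<and> (\<forall>p\<in>S. int p dvd qf B v \<and> \<not> (int p)\<^sup>2 dvd qf B v)"
proof -
  have "u \<noteq> 0" using neg by (auto simp: qf_def)
  then obtain g v where g: "g \<noteq> 0" and u: "u = g *s v" and v: "primitive_vec v"
    using exists_primitive_factor by blast
  have qg: "qf B u = g\<^sup>2 * qf B v" unfolding u by (rule qf_smult)
  have "bil B h v = 0" using hu g unfolding u by (simp add: bil_smult_right)
  moreover have "qf B v < 0"
  proof (rule ccontr)
    assume "\<not> qf B v < 0"
    then have "g\<^sup>2 * qf B v \<ge> 0" by simp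
    then show False using qg neg by simp
  qed
  moreover have "int p dvd qf B v \<and> \<not> (int p)\<^sup>2 dvd qf B v" if "p \<in> S" for p
    using exact_dvd_of_square_mult[of "int p" g "qf B v"] exact that qg by simp
  ultimately show ?thesis using v by blast
qed

lemma exists_orthogonal_vector_exact_prime_divisors:
  fixes B :: "'n::finite \<Rightarrow> 'n \<Rightarrow> int"
  assumes sym: "symmetric_form B" and sign: "has_signature B p m" and m: "m > 0"
    and n: "CARD('n) \<ge> 4" and h: "qf B h > 0"
  shows "\<exists>K::nat. \<forall>S. finite S \<longrightarrow> (\<forall>p\<in>S. prime p \<and> K < p) \<longrightarrow>
    (\<exists>v. bil B h v = 0 \<and> primitive_vec v \<and> qf B v < 0
      \<and> (\<forall>p\<in>S. int p dvd qf B v \<and> \<not> (int p)\<^sup>2 dvd qf B v))"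
proof -
  obtain w1 w2 w3 where w: "bil B h w1 = 0" "bil B h w2 = 0" "bil B h w3 = 0"
    "bil B w1 w2 = 0" "bil B w1 w3 = 0" "bil B w2 w3 = 0" "qf B w1 < 0" "qf B w2 \<noteq> 0" "qf B w3 \<noteq> 0"
    using exists_orthogonal_triple[OF sym sign m n h] by blast
  define K where "K = nat (\<bar>qf B w1\<bar> + \<bar>qf B w2\<bar> + \<bar>qf B w3\<bar>)"
  show ?thesis
  proof (intro exI[of _ K] allI impI)
    fix S assume fin: "finite S" and S: "\<forall>p\<in>S. prime p \<and> K < p"
    have K_eq: "int K = \<bar>qf B w1\<bar> + \<bar>qf B w2\<bar> + \<bar>qf B w3\<bar>" unfolding K_def by simp
    have "\<bar>qf B w1\<bar> \<ge> 1" "\<bar>qf B w2\<bar> \<ge> 1" "\<bar>qf B w3\<bar> \<ge> 1" using w(7-9) by auto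
    then have bounds: "\<bar>qf B w1\<bar> \<le> int K" "\<bar>qf B w2\<bar> \<le> int K" "\<bar>qf B w3\<bar> \<le> int K" "2 < K"
      using K_eq by linarith+
    have small_not_dvd: "\<not> int p dvd a" if "p \<in> S" "a \<noteq> 0" "\<bar>a\<bar> \<le> int K" for p a
    proof
      assume "int p dvd a"
      then have "int p \<le> \<bar>a\<bar>" using dvd_imp_le_int[OF that(2)] by fastforce
      then show False using S that(1,3) by force
    qed
    have "\<forall>p\<in>S. prime p \<and> 2 < p \<and> \<not> int p dvd qf B w1 \<and> \<not> int p dvd qf B w2 \<and> \<not> int p dvd qf B w3"
      using S bounds w(7-9) small_not_dvd by force
    then obtain x y z where neg: "qf B w1 * x\<^sup>2 + qf B w2 * y\<^sup>2 + qf B w3 * z\<^sup>2 < 0"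
      and exact: "\<forall>p\<in>S. int p dvd qf B w1 * x\<^sup>2 + qf B w2 * y\<^sup>2 + qf B w3 * z\<^sup>2
        \<and> \<not> (int p)\<^sup>2 dvd qf B w1 * x\<^sup>2 + qf B w2 * y\<^sup>2 + qf B w3 * z\<^sup>2"
      using diag_form_negative_exact_divisors[OF fin w(7)] by blast
    define u where "u = x *s w1 + y *s w2 + z *s w3"
    have "bil B h u = 0" unfolding u_def using w(1-3) by (simp add: bil_add_right bil_smult_right)
    moreover have "qf B u = qf B w1 * x\<^sup>2 + qf B w2 * y\<^sup>2 + qf B w3 * z\<^sup>2"
      unfolding u_def using qf_orthogonal_triple[OF sym w(4-6)] .
    ultimately show "\<exists>v. bil B h v = 0 \<and> primitive_vec v \<and> qf B v < 0
      \<and> (\<forall>p\<in>S. int p dvd qf B v \<and> \<not> (int p)\<^sup>2 dvd qf B v)"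
      using primitive_part_exact_prime_divisors[of B h u S] neg exact S by simp
  qed
qed

lemma saturated_span_avoids_small_values:
  fixes B :: "'n::finite \<Rightarrow> 'n \<Rightarrow> int" and N :: int
  assumes sym: "symmetric_form B" and hv: "bil B h v = 0" and N: "N > 0"
    and primes: "\<And>k. k \<in> {1..N} \<Longrightarrow> \<exists>P c. prime P \<and> P mod 4 = 3
      \<and> int P dvd k * qf B h * c\<^sup>2 - 1 \<and> int P dvd qf B v \<and> \<not> (int P)\<^sup>2 dvd qf B v"
  shows "anisotropic B (saturated_span h v)"
    and "x \<in> saturated_span h v \<Longrightarrow> \<not> (- N \<le> qf B x \<and> qf B x < 0)"
proof -
  have trivial: "a = 0 \<and> b = 0 \<and> f = 0"
    if k: "k \<in> {1..N}" and eq: "qf B h * a\<^sup>2 + qf B v * b\<^sup>2 + k * f\<^sup>2 = 0" for k a b f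
  proof -
    obtain P c where P: "prime P" "P mod 4 = 3" "int P dvd k * qf B h * c\<^sup>2 - 1"
      and exact: "int P dvd qf B v" "\<not> (int P)\<^sup>2 dvd qf B v"
      using primes[OF k] by blast
    have "prime (int P)" using P(1) by simp
    from diag_form_descent[OF this exact prime_3mod4_binary_form_dvd[OF P] eq] show ?thesis .
  qed
  have one: "1 \<in> {1..N}" using N by simp
  show "anisotropic B (saturated_span h v)"
    unfolding anisotropic_def
  proof (intro ballI impI)
    fix x assume x_in: "x \<in> saturated_span h v" and "qf B x = 0"
    obtain f a b where "f\<^sup>2 * qf B x = a\<^sup>2 * qf B h + b\<^sup>2 * qf B v"
      and x: "a = 0 \<and> b = 0 \<longrightarrow> x = 0"
      using qf_saturated_span[OF sym hv x_in] by blast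
    then have "qf B h * a\<^sup>2 + qf B v * b\<^sup>2 + 1 * 0\<^sup>2 = 0"
      using \<open>qf B x = 0\<close> by (simp add: mult.commute)
    with trivial[OF one] have "a = 0" "b = 0" by blast+
    then show "x = 0" using x by blast
  qed
  show "\<not> (- N \<le> qf B x \<and> qf B x < 0)" if x_in: "x \<in> saturated_span h v"
  proof
    assume "- N \<le> qf B x \<and> qf B x < 0"
    then have k: "- qf B x \<in> {1..N}" by simp
    obtain f a b where "f \<noteq> 0" and "f\<^sup>2 * qf B x = a\<^sup>2 * qf B h + b\<^sup>2 * qf B v"
      using qf_saturated_span[OF sym hv x_in] by blast
    moreover from this have "qf B h * a\<^sup>2 + qf B v * b\<^sup>2 + (- qf B x) * f\<^sup>2 = 0"
      by (simp add: algebra_simps)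
    ultimately show False using trivial[OF k] by blast
  qed
qed

lemma exists_saturated_span_without_small_values:
  fixes B :: "'n::finite \<Rightarrow> 'n \<Rightarrow> int" and N :: int and j :: nat
  assumes sym: "symmetric_form B" and sign: "has_signature B p m" and m: "m > 0"
    and n: "CARD('n) \<ge> 4" and h: "qf B h > 0" and N: "N > 0"
  shows "\<exists>v. bil B h v = 0 \<and> primitive_vec v \<and> qf B v \<le> - int j
    \<and> anisotropic B (saturated_span h v)
    \<and> (\<forall>x\<in>saturated_span h v. \<not> (- N \<le> qf B x \<and> qf B x < 0))"
proof -
  obtain K :: nat where K: "\<forall>S. finite S \<longrightarrow> (\<forall>p\<in>S. prime p \<and> K < p) \<longrightarrow>
    (\<exists>v. bil B h v = 0 \<and> primitive_vec v \<and> qf B v < 0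
      \<and> (\<forall>p\<in>S. int p dvd qf B v \<and> \<not> (int p)\<^sup>2 dvd qf B v))"
    using exists_orthogonal_vector_exact_prime_divisors[OF sym sign m n h] by blast
  have "\<exists>P c. prime P \<and> K + j < P \<and> P mod 4 = 3 \<and> int P dvd k * qf B h * c\<^sup>2 - 1"
    if "k \<in> {1..N}" for k
    using large_prime_3mod4_dvd[of "k * qf B h" "K + j"] that h by simp
  then have "\<forall>k\<in>{1..N}. \<exists>P c. prime P \<and> K + j < P \<and> P mod 4 = 3 \<and> int P dvd k * qf B h * c\<^sup>2 - 1"
    by blast
  from bchoice[OF this] obtain P where P: "\<forall>k\<in>{1..N}. \<exists>c. prime (P k) \<and> K + j < P k
      \<and> P k mod 4 = 3 \<and> int (P k) dvd k * qf B h * c\<^sup>2 - 1"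
    by blast
  have "finite (P ` {1..N})" by simp
  moreover have "\<forall>p\<in>P ` {1..N}. prime p \<and> K < p" using P by fastforce
  ultimately have "\<exists>v. bil B h v = 0 \<and> primitive_vec v \<and> qf B v < 0
      \<and> (\<forall>p\<in>P ` {1..N}. int p dvd qf B v \<and> \<not> (int p)\<^sup>2 dvd qf B v)"
    using K by blast
  then obtain v where hv: "bil B h v = 0" and v: "primitive_vec v" and D: "qf B v < 0"
    and exact: "\<forall>p\<in>P ` {1..N}. int p dvd qf B v \<and> \<not> (int p)\<^sup>2 dvd qf B v"
    by blast
  have "\<exists>Q c. prime Q \<and> Q mod 4 = 3 \<and> int Q dvd k * qf B h * c\<^sup>2 - 1
      \<and> int Q dvd qf B v \<and> \<not> (int Q)\<^sup>2 dvd qf B v" if k: "k \<in> {1..N}" for k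
  proof -
    obtain c where "prime (P k)" "P k mod 4 = 3" "int (P k) dvd k * qf B h * c\<^sup>2 - 1"
      using P k by blast
    moreover have "int (P k) dvd qf B v \<and> \<not> (int (P k))\<^sup>2 dvd qf B v" using exact k by blast
    ultimately show ?thesis by blast
  qed
  note avoids = saturated_span_avoids_small_values[OF sym hv N this]
  have "qf B v \<le> - int j"
  proof -
    have one: "1 \<in> {1..N}" using N by simp
    then obtain c where "K + j < P 1" using P by blast
    moreover have "int (P 1) dvd qf B v" using exact one by blast
    then have "int (P 1) \<le> \<bar>qf B v\<bar>" using dvd_imp_le_int[of "qf B v" "int (P 1)"] D by simp
    ultimately show ?thesis using D by linarith
  qed
  then show ?thesis using hv v avoids by blast
qed

lemma filterlim_at_bot_if_le_minus:
  fixes f :: "nat \<Rightarrow> int"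
  assumes "\<And>j. f j \<le> - int j"
  shows "filterlim f at_bot sequentially"
  unfolding filterlim_at_bot
proof
  fix Z :: int
  show "\<forall>\<^sub>F j in sequentially. f j \<le> Z"
  proof (rule eventually_sequentiallyI[of "nat (- Z)"])
    fix j assume "nat (- Z) \<le> j"
    then show "f j \<le> Z" using assms[of j] by linarith
  qed
qed

theorem proposition2p6:
  fixes B :: "'n::finite \<Rightarrow> 'n \<Rightarrow> int"
    and h :: "int^'n"
    and MBM :: "(int^'n) set"
    and N :: int
  assumes b2: "CARD('n) \<ge> 6"
    and sym: "symmetric_form B"
    and prim_form: "primitive_form B"
    and sign: "has_signature B 3 (CARD('n) - 3)"
    and h_prim: "primitive_vec h"
    and h_pos: "qf B h > 0"
    and N_pos: "N > 0"
    and MBM_bound: "\<forall>v\<in>MBM. - N \<le> qf B v \<and> qf B v < 0"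
  shows "\<exists>(M :: nat \<Rightarrow> (int^'n) set) (v :: nat \<Rightarrow> int^'n).
           (\<forall>j. primitive_sublattice (M j) \<and> lattice_rank (M j) = 2 \<and> anisotropic B (M j)
                \<and> h \<in> M j
                \<and> M j \<inter> orth_compl B h = {k *s v j | k. True}
                \<and> primitive_vec (v j)
                \<and> M j \<inter> MBM = {})
         \<and> filterlim (\<lambda>j. qf B (v j)) at_bot sequentially"
proof -
  have m: "CARD('n) - 3 > 0" and n: "CARD('n) \<ge> 4" using b2 by auto
  have "\<forall>j. \<exists>v. bil B h v = 0 \<and> primitive_vec v \<and> qf B v \<le> - int j
    \<and> anisotropic B (saturated_span h v) \<and> (\<forall>x\<in>saturated_span h v. \<not> (- N \<le> qf B x \<and> qf B x < 0))"
    by (intro allI exists_saturated_span_without_small_values[OF sym sign m n h_pos N_pos])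
  from choice[OF this] obtain v where "\<forall>j. bil B h (v j) = 0 \<and> primitive_vec (v j) \<and> qf B (v j) \<le> - int j
    \<and> anisotropic B (saturated_span h (v j))
    \<and> (\<forall>x\<in>saturated_span h (v j). \<not> (- N \<le> qf B x \<and> qf B x < 0))"
    by blast
  then have hv: "\<And>j. bil B h (v j) = 0" and v: "\<And>j. primitive_vec (v j)"
    and deep: "\<And>j. qf B (v j) \<le> - int j" and aniso: "\<And>j. anisotropic B (saturated_span h (v j))"
    and no_small: "\<And>j. \<forall>x\<in>saturated_span h (v j). \<not> (- N \<le> qf B x \<and> qf B x < 0)"
    by simp_all
  show ?thesis
  proof (intro exI[of _ "\<lambda>j. saturated_span h (v j)"] exI[of _ v] conjI allI)
    fix j
    show "primitive_sublattice (saturated_span h (v j))" by (rule primitive_sublattice_saturated_span)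
    show "lattice_rank (saturated_span h (v j)) = 2"
      using lattice_rank_saturated_span[OF sym hv h_pos primitive_vec_nonzero[OF v]] .
    show "anisotropic B (saturated_span h (v j))" by (rule aniso)
    show "h \<in> saturated_span h (v j)" by (rule saturated_span_left)
    show "saturated_span h (v j) \<inter> orth_compl B h = {k *s v j | k. True}"
      using saturated_span_Int_orth_compl[OF hv _ v] h_pos by simp
    show "primitive_vec (v j)" by (rule v)
    show "saturated_span h (v j) \<inter> MBM = {}" using no_small MBM_bound by blast
  next
    show "filterlim (\<lambda>j. qf B (v j)) at_bot sequentially"
      using deep by (rule filterlim_at_bot_if_le_minus)
  qed
qed

end
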